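(* Let $q\ge 2$ and $m\ge 1$ be integers. Let $N^{\rm coord}_q(m)$ be the smallest natural number $N$ such that for every $n>N$ there is no A-primitive partition of ${\bf Z}_q^n$ into $q^m$ subcubes of dimension $n-m$, and let $c^{\rm coord*}_q(n,m)$ be the number of different unordered A-primitive partitions of ${\bf Z}_q^n$ into $q^m$ subcubes of dimension $n-m$. Then $$N^{\rm coord}_q(m)=\frac{q^m-1}{q-1}\quad\text{and}\quad c^{\rm coord*}_q\!\left(\frac{q^m-1}{q-1},m\right)=\left(\frac{q^m-1}{q-1}\right)!.$$
   Context: A $d$-dimensional subcube of ${\bf Z}_q^n$ is a subset obtained by fixing the values of some $n-d$ coordinates and letting each remaining coordinate run through all of ${\bf Z}_q$. A partition into subcubes is a collection of subcubes such that each vector of ${\bf Z}_q^n$ lies in exactly one of them. A partition into subcubes is A-primitive if every coordinate $i\in\{1,\dots,n\}$ is fixed in at least one subcube of the partition. It is known (from earlier work) that the number $N^{\rm coord}_q(m)$ exists, i.e. for each $m$ there is some $N$ beyond which no such A-primitive partitions exist. *)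

theory Defs
  imports Main
begin

text \<open>A subcube is given by a pattern: a list of length n over nat option, where
Some v (v < q) means the coordinate is fixed to v and None means it is free.\<close>

definition Zq_vecs :: "nat \<Rightarrow> nat \<Rightarrow> nat list set" where
  "Zq_vecs q n = {x. length x = n \<and> (\<forall>i<n. x ! i < q)}"

definition is_subcube_pat :: "nat \<Rightarrow> nat \<Rightarrow> nat option list \<Rightarrow> bool" where
  "is_subcube_pat q n p \<longleftrightarrow> length p = n \<and> (\<forall>i<n. \<forall>v. p ! i = Some v \<longrightarrow> v < q)"

definition cube_dim :: "nat option list \<Rightarrow> nat" where
  "cube_dim p = card {i. i < length p \<and> p ! i = None}"

definition cube_set :: "nat \<Rightarrow> nat option list \<Rightarrow> nat list set" where
  "cube_set q p = {x \<in> Zq_vecs q (length p). \<forall>i<length p. \<forall>v. p ! i = Some v \<longrightarrow> x ! i = v}"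

text \<open>An A-primitive partition of Z_q^n into q^m subcubes of dimension n - m
(requires m \<le> n, enforced by d + m = n).\<close>
definition aprim_partition :: "nat \<Rightarrow> nat \<Rightarrow> nat \<Rightarrow> nat option list set \<Rightarrow> bool" where
  "aprim_partition q n m P \<longleftrightarrow>
     (\<forall>p\<in>P. is_subcube_pat q n p \<and> cube_dim p + m = n) \<and>
     card P = q ^ m \<and>
     (\<forall>x\<in>Zq_vecs q n. \<exists>!p. p \<in> P \<and> x \<in> cube_set q p) \<and>
     (\<forall>i<n. \<exists>p\<in>P. p ! i \<noteq> None)"

definition N_coord :: "nat \<Rightarrow> nat \<Rightarrow> nat" where
  "N_coord q m = (LEAST N. \<forall>n>N. \<not> (\<exists>P. aprim_partition q n m P))"

definition c_coord_star :: "nat \<Rightarrow> nat \<Rightarrow> nat \<Rightarrow> nat" where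
  "c_coord_star q n m = card {P. aprim_partition q n m P}"

end

theory Submission
  imports Defs "HOL-Library.Sublist" "HOL-Combinatorics.Permutations"
begin

text \<open>Let J be the set of coordinates fixed in some cube of a partition P of Z_q^n into subcubes,
  and let i \<in> J be fixed in the fewest cubes. Restricting P to a face x_i = a keeps every other
  coordinate of J in use and loses at least the q - 1 cubes fixing i to the other values, so
  induction on |J| gives |P| \<ge> 1 + (q - 1) |J|. For an A-primitive partition into q^m cubes this
  says n \<le> (q^m - 1) / (q - 1).

  In the case of equality some coordinate r is fixed in every cube, and the restrictions of P to
  the faces x_r = c are again extremal and use pairwise disjoint sets of coordinates. By induction
  on m, P is then the partition into the leaves of the complete q-ary tree of depth m whose
  (q^m - 1) / (q - 1) inner nodes are labelled bijectively by the coordinates. Conversely every such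
  labelling gives an A-primitive partition, and the labelling can be read off from the inclusions
  between the sets of cubes fixing the various coordinates; so there are n! of them.\<close>

lemma nth_list_update_if: "j < length xs \<Longrightarrow> xs[i := x] ! j = (if i = j then x else xs ! j)"
  by (cases "i = j") simp_all

lemma card_UN_eq_sum_imp_disjoint:
  assumes "finite I" "\<And>i. i \<in> I \<Longrightarrow> finite (A i)"
    and card_eq: "card (\<Union>i\<in>I. A i) = (\<Sum>i\<in>I. card (A i))"
    and "i \<in> I" "j \<in> I" "i \<noteq> j"
  shows "A i \<inter> A j = {}"
proof -
  let ?R = "\<Union>k\<in>I - {i}. A k"
  have "(\<Union>k\<in>I. A k) = A i \<union> ?R" using assms(4) by blast
  moreover have "finite ?R" using assms(1,2) by blast
  ultimately have "card (\<Union>k\<in>I. A k) + card (A i \<inter> ?R) = card (A i) + card ?R"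
    using card_Un_Int assms(2,4) by metis
  moreover have "card ?R \<le> (\<Sum>k\<in>I - {i}. card (A k))" using assms(1) by (simp add: card_UN_le)
  moreover have "(\<Sum>k\<in>I. card (A k)) = card (A i) + (\<Sum>k\<in>I - {i}. card (A k))"
    using assms(1,4) by (simp add: sum.remove)
  ultimately have "card (A i \<inter> ?R) = 0" using card_eq by linarith
  then have "A i \<inter> ?R = {}" using \<open>finite ?R\<close> by simp
  then show ?thesis using assms(5,6) by blast
qed

lemma strict_prefix_iff_take: "strict_prefix u w \<longleftrightarrow> length u < length w \<and> take (length u) w = u"
proof
  assume "strict_prefix u w"
  then show "length u < length w \<and> take (length u) w = u"
    by (auto simp: prefix_length_less elim!: strict_prefixE')
next
  assume u: "length u < length w \<and> take (length u) w = u"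
  then have "w = u @ w ! length u # drop (Suc (length u)) w"
    by (metis append_take_drop_id Cons_nth_drop_Suc)
  then show "strict_prefix u w" by (rule strict_prefixI')
qed

lemma card_strict_prefixes: "card {u. strict_prefix u w} = length w"
proof -
  have "{u. strict_prefix u w} = set (prefixes w) - {w}" by (auto simp: strict_prefix_def)
  then show ?thesis by simp
qed

lemma bij_betw_obtain_permutes_factor:
  assumes f: "bij_betw f A B" and g: "bij_betw g A B"
  obtains \<sigma> where "\<sigma> permutes A" "\<And>j. j \<in> A \<Longrightarrow> g j = f (\<sigma> j)"
proof
  define \<sigma> where "\<sigma> j = (if j \<in> A then inv_into A f (g j) else j)" for j
  have "bij_betw \<sigma> A A"
    using bij_betw_trans[OF g bij_betw_inv_into[OF f]]
    by (rule bij_betw_cong[THEN iffD1, rotated]) (simp add: \<sigma>_def)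
  then show "\<sigma> permutes A" by (rule bij_imp_permutes) (simp add: \<sigma>_def)
  fix j assume "j \<in> A"
  moreover have "g j \<in> f ` A" using \<open>j \<in> A\<close> bij_betwE[OF g] bij_betw_imp_surj_on[OF f] by blast
  ultimately show "g j = f (\<sigma> j)" by (simp add: \<sigma>_def f_inv_into_f)
qed

lemma permutes_eq_if_comp_eq:
  assumes "inj_on f A" "\<sigma> permutes A" "\<tau> permutes A" "\<And>j. j \<in> A \<Longrightarrow> f (\<sigma> j) = f (\<tau> j)"
  shows "\<sigma> = \<tau>"
proof
  fix j
  show "\<sigma> j = \<tau> j"
  proof (cases "j \<in> A")
    case True
    then show ?thesis
      using assms inj_on_eq_iff[OF assms(1)] permutes_in_image[OF assms(2)]
        permutes_in_image[OF assms(3)] by metis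
  qed (simp add: permutes_not_in[OF assms(2)] permutes_not_in[OF assms(3)])
qed

lemma mem_Zq_vecs: "x \<in> Zq_vecs q n \<longleftrightarrow> length x = n \<and> (\<forall>i<n. x ! i < q)"
  unfolding Zq_vecs_def by auto

lemma mem_cube_set:
  "x \<in> cube_set q p \<longleftrightarrow> length x = length p \<and> (\<forall>i<length p. x ! i < q) \<and>
     (\<forall>i<length p. \<forall>v. p ! i = Some v \<longrightarrow> x ! i = v)"
  unfolding cube_set_def Zq_vecs_def by auto

lemma cube_set_subset_Zq_vecs: "cube_set q p \<subseteq> Zq_vecs q (length p)"
  unfolding cube_set_def by auto

definition cube_corner :: "nat option list \<Rightarrow> nat list" where
  "cube_corner p = map (\<lambda>z. case z of None \<Rightarrow> 0 | Some v \<Rightarrow> v) p"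

lemma length_cube_corner [simp]: "length (cube_corner p) = length p"
  unfolding cube_corner_def by simp

lemma cube_corner_mem_cube_set:
  assumes "is_subcube_pat q n p" "0 < q"
  shows "cube_corner p \<in> cube_set q p"
  using assms unfolding mem_cube_set cube_corner_def is_subcube_pat_def
  by (auto split: option.splits)

lemma list_update_mem_cube_set:
  assumes x: "x \<in> cube_set q p" and len: "length p' = length p"
    and agree: "\<And>j. j \<noteq> i \<Longrightarrow> p' ! j = p ! j"
    and c: "c < q" "p' ! i = None \<or> p' ! i = Some c"
  shows "x[i := c] \<in> cube_set q p'"
  using assms unfolding mem_cube_set
  by (auto simp: nth_list_update_if split: if_splits)

lemma mem_cube_set_free_coord: "x \<in> cube_set q p \<Longrightarrow> x \<in> cube_set q (p[i := None])"
  unfolding mem_cube_set by (auto simp: nth_list_update_if split: if_splits)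

lemma is_subcube_pat_update_None: "is_subcube_pat q n p \<Longrightarrow> is_subcube_pat q n (p[i := None])"
  unfolding is_subcube_pat_def by (simp add: nth_list_update_if)

lemma is_subcube_pat_update_Some:
  "is_subcube_pat q n p \<Longrightarrow> c < q \<Longrightarrow> is_subcube_pat q n (p[i := Some c])"
  unfolding is_subcube_pat_def by (simp add: nth_list_update_if)

lemma cube_set_subset_imp_fixed:
  assumes p: "is_subcube_pat q n p" and q: "2 \<le> q"
    and sub: "cube_set q p \<subseteq> cube_set q p'" and len: "length p' = n"
    and k: "k < n" "p' ! k = Some v"
  shows "p ! k = Some v"
proof -
  have corner: "cube_corner p \<in> cube_set q p"
    using cube_corner_mem_cube_set[OF p] q by simp
  have lp: "length p = n" using p unfolding is_subcube_pat_def by simp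
  show ?thesis
  proof (cases "p ! k")
    case None
    define c where "c = (if v = 0 then 1 else 0 :: nat)"
    have "(cube_corner p)[k := c] \<in> cube_set q p"
      using list_update_mem_cube_set[OF corner] None q by (simp add: c_def)
    then have "(cube_corner p)[k := c] \<in> cube_set q p'" using sub by blast
    then have "(cube_corner p)[k := c] ! k = v" using len k unfolding mem_cube_set by auto
    then show ?thesis using k lp by (simp add: c_def split: if_splits)
  next
    case (Some w)
    have "cube_corner p \<in> cube_set q p'" using corner sub by blast
    then have "cube_corner p ! k = v" using len k unfolding mem_cube_set by auto
    then show ?thesis using Some k lp by (simp add: cube_corner_def)
  qed
qed

lemma cube_dim_eq_length_iff: "cube_dim p = length p \<longleftrightarrow> (\<forall>k<length p. p ! k = None)"
proof -
  have sub: "{i. i < length p \<and> p ! i = None} \<subseteq> {..<length p}" by auto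
  have "cube_dim p = length p \<longleftrightarrow> {i. i < length p \<and> p ! i = None} = {..<length p}"
    unfolding cube_dim_def
  proof
    assume "card {i. i < length p \<and> p ! i = None} = length p"
    then show "{i. i < length p \<and> p ! i = None} = {..<length p}"
      using card_subset_eq[OF finite_lessThan sub] by simp
  qed simp
  then show ?thesis by auto
qed

lemma cube_dim_list_update_None:
  assumes "r < length p" "p ! r \<noteq> None"
  shows "cube_dim (p[r := None]) = Suc (cube_dim p)"
proof -
  have "{i. i < length p \<and> p[r := None] ! i = None} = insert r {i. i < length p \<and> p ! i = None}"
    using assms by (auto simp: nth_list_update_if)
  then show ?thesis using assms unfolding cube_dim_def by simp
qed

section \<open>Subcube partitions and their restrictions to faces\<close>

definition subcube_partition :: "nat \<Rightarrow> nat \<Rightarrow> nat option list set \<Rightarrow> bool" where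
  "subcube_partition q n P \<longleftrightarrow> (\<forall>p\<in>P. is_subcube_pat q n p) \<and>
     (\<forall>x\<in>Zq_vecs q n. \<exists>!p. p \<in> P \<and> x \<in> cube_set q p)"

definition fixed_coords :: "nat \<Rightarrow> nat option list set \<Rightarrow> nat set" where
  "fixed_coords n P = {i. i < n \<and> (\<exists>p\<in>P. p ! i \<noteq> None)}"

text \<open>The partition of the face x_i = a, with coordinate i set free again.\<close>
definition restrict_coord :: "nat \<Rightarrow> nat \<Rightarrow> nat option list set \<Rightarrow> nat option list set" where
  "restrict_coord i a P = (\<lambda>p. p[i := None]) ` {p\<in>P. p ! i = None \<or> p ! i = Some a}"

lemma finite_subcube_pats: "finite {p. is_subcube_pat q n p}"
proof (rule finite_subset)
  show "{p. is_subcube_pat q n p} \<subseteq> {xs. set xs \<subseteq> insert None (Some ` {..<q}) \<and> length xs = n}"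
    unfolding is_subcube_pat_def
    by (auto simp: in_set_conv_nth) (metis lessThan_iff not_None_eq rev_image_eqI)
  show "finite {xs. set xs \<subseteq> insert None (Some ` {..<q}) \<and> length xs = n}"
    by (rule finite_lists_length_eq) auto
qed

context
  fixes q n :: nat and P :: "nat option list set"
  assumes P: "subcube_partition q n P"
begin

lemma subcube_partition_pat: "p \<in> P \<Longrightarrow> is_subcube_pat q n p"
  using P unfolding subcube_partition_def by blast

lemma subcube_partition_length: "p \<in> P \<Longrightarrow> length p = n"
  using subcube_partition_pat unfolding is_subcube_pat_def by blast

lemma subcube_partition_value_less: "p \<in> P \<Longrightarrow> i < n \<Longrightarrow> p ! i = Some v \<Longrightarrow> v < q"
  using subcube_partition_pat unfolding is_subcube_pat_def by blast

lemma subcube_partition_finite: "finite P"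
  using finite_subset[OF _ finite_subcube_pats] subcube_partition_pat by blast

lemma subcube_partition_cover: "x \<in> Zq_vecs q n \<Longrightarrow> \<exists>p\<in>P. x \<in> cube_set q p"
  using P unfolding subcube_partition_def by blast

lemma subcube_partition_unique:
  "p1 \<in> P \<Longrightarrow> p2 \<in> P \<Longrightarrow> x \<in> cube_set q p1 \<Longrightarrow> x \<in> cube_set q p2 \<Longrightarrow> p1 = p2"
  using P cube_set_subset_Zq_vecs subcube_partition_length unfolding subcube_partition_def
  by blast

lemma subcube_partition_nonempty: "0 < q \<Longrightarrow> P \<noteq> {}"
  using subcube_partition_cover[of "replicate n 0"] by (auto simp: mem_Zq_vecs)

lemma subcube_partition_restrict_coord:
  assumes a: "a < q" and i: "i < n"
  shows "subcube_partition q n (restrict_coord i a P)"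
  unfolding subcube_partition_def
proof (intro conjI ballI)
  fix p' assume "p' \<in> restrict_coord i a P"
  then show "is_subcube_pat q n p'"
    unfolding restrict_coord_def using subcube_partition_pat is_subcube_pat_update_None by blast
next
  fix x assume x: "x \<in> Zq_vecs q n"
  then have "x[i := a] \<in> Zq_vecs q n" using a by (simp add: mem_Zq_vecs nth_list_update_if)
  then obtain p where p: "p \<in> P" "x[i := a] \<in> cube_set q p" using subcube_partition_cover by blast
  have lp: "length p = n" using subcube_partition_length[OF p(1)] .
  have lx: "length x = n" using x by (simp add: mem_Zq_vecs)
  have pi: "p ! i = None \<or> p ! i = Some a"
    using p(2) lp lx i by (cases "p ! i") (auto simp: mem_cube_set)
  have "x[i := a] \<in> cube_set q (p[i := None])" using mem_cube_set_free_coord[OF p(2)] .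
  then have "(x[i := a])[i := x ! i] \<in> cube_set q (p[i := None])"
    by (rule list_update_mem_cube_set) (use x i lp in \<open>auto simp: mem_Zq_vecs\<close>)
  then have x_in: "x \<in> cube_set q (p[i := None])" using lx i by simp
  show "\<exists>!p'. p' \<in> restrict_coord i a P \<and> x \<in> cube_set q p'"
  proof (rule ex1I)
    show "p[i := None] \<in> restrict_coord i a P \<and> x \<in> cube_set q (p[i := None])"
      using p pi x_in unfolding restrict_coord_def by blast
  next
    fix p' assume "p' \<in> restrict_coord i a P \<and> x \<in> cube_set q p'"
    then obtain p2 where p2: "p2 \<in> P" "p2 ! i = None \<or> p2 ! i = Some a" "p' = p2[i := None]"
      "x \<in> cube_set q (p2[i := None])" unfolding restrict_coord_def by blast
    have "x[i := a] \<in> cube_set q p2"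
      using list_update_mem_cube_set[OF p2(4) _ _ a p2(2)] by simp
    then have "p2 = p" using subcube_partition_unique p2(1) p by blast
    then show "p' = p[i := None]" using p2 by simp
  qed
qed

lemma card_restrict_coord:
  assumes a: "a < q"
  shows "card (restrict_coord i a P) = card {p\<in>P. p ! i = None \<or> p ! i = Some a}"
  unfolding restrict_coord_def
proof (rule card_image, rule inj_onI)
  fix p1 p2
  assume p1: "p1 \<in> {p\<in>P. p ! i = None \<or> p ! i = Some a}"
    and p2: "p2 \<in> {p\<in>P. p ! i = None \<or> p ! i = Some a}" and eq: "p1[i := None] = p2[i := None]"
  have agree: "p1 ! j = p2 ! j" if "j \<noteq> i" for j
    using arg_cong[OF eq, of "\<lambda>p. p ! j"] that by simp
  have len: "length p1 = length p2" using arg_cong[OF eq, of length] by simp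
  have "cube_corner p2 \<in> cube_set q p2"
    using cube_corner_mem_cube_set subcube_partition_pat p2 a by blast
  then have "(cube_corner p2)[i := a] \<in> cube_set q p1 \<inter> cube_set q p2"
    using list_update_mem_cube_set a p1 p2 len agree by auto
  then show "p1 = p2" using subcube_partition_unique p1 p2 by blast
qed

lemma subcube_partition_takes_all_values:
  assumes i: "i \<in> fixed_coords n P"
  shows "(\<lambda>p. p ! i) ` {p\<in>P. p ! i \<noteq> None} = Some ` {..<q}"
proof (intro equalityI subsetI)
  fix z assume "z \<in> (\<lambda>p. p ! i) ` {p\<in>P. p ! i \<noteq> None}"
  then show "z \<in> Some ` {..<q}"
    using i subcube_partition_value_less unfolding fixed_coords_def by fastforce
next
  fix z assume "z \<in> Some ` {..<q}"
  then obtain b where z: "z = Some b" and b: "b < q" by blast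
  obtain p where p: "p \<in> P" "p ! i \<noteq> None" and "i < n"
    using i unfolding fixed_coords_def by blast
  have corner: "cube_corner p \<in> cube_set q p"
    using cube_corner_mem_cube_set subcube_partition_pat p(1) b by fastforce
  then have "(cube_corner p)[i := b] \<in> Zq_vecs q n"
    using b subcube_partition_length[OF p(1)]
    by (auto simp: mem_cube_set mem_Zq_vecs nth_list_update_if)
  then obtain p' where p': "p' \<in> P" "(cube_corner p)[i := b] \<in> cube_set q p'"
    using subcube_partition_cover by blast
  have "p' ! i = Some b"
  proof (cases "p' ! i")
    case None
    have "((cube_corner p)[i := b])[i := cube_corner p ! i] \<in> cube_set q p'"
      by (rule list_update_mem_cube_set[OF p'(2)]) (use corner None \<open>i < n\<close> p(1) in
          \<open>auto simp: mem_cube_set subcube_partition_length\<close>)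
    then have "p' = p"
      using subcube_partition_unique[OF p'(1) p(1)] corner \<open>i < n\<close> subcube_partition_length[OF p(1)]
      by simp
    then show ?thesis using None p(2) by simp
  next
    case (Some v)
    then show ?thesis
      using p'(2) \<open>i < n\<close> subcube_partition_length[OF p'(1)] subcube_partition_length[OF p(1)]
      by (auto simp: mem_cube_set)
  qed
  then show "z \<in> (\<lambda>p. p ! i) ` {p\<in>P. p ! i \<noteq> None}" using p'(1) z by force
qed

lemma subcube_partition_obtain_value:
  assumes "i \<in> fixed_coords n P" "b < q"
  obtains p where "p \<in> P" "p ! i = Some b"
proof -
  have "Some b \<in> (\<lambda>p. p ! i) ` {p\<in>P. p ! i \<noteq> None}"
    using subcube_partition_takes_all_values[OF assms(1)] assms(2) by simp
  then show ?thesis using that by auto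
qed

lemma fixed_coords_restrict_coord:
  "fixed_coords n (restrict_coord i a P) =
     {k. k < n \<and> k \<noteq> i \<and> (\<exists>p\<in>P. (p ! i = None \<or> p ! i = Some a) \<and> p ! k \<noteq> None)}"
  unfolding fixed_coords_def restrict_coord_def
  using subcube_partition_length by (auto simp: nth_list_update_if split: if_splits)

lemma card_split_restrict_coord:
  assumes "a < q"
  shows "card P = card (restrict_coord i a P) + card {p\<in>P. p ! i \<noteq> None \<and> p ! i \<noteq> Some a}"
proof -
  have "P = {p\<in>P. p ! i = None \<or> p ! i = Some a} \<union> {p\<in>P. p ! i \<noteq> None \<and> p ! i \<noteq> Some a}"
    by blast
  then have "card P = card {p\<in>P. p ! i = None \<or> p ! i = Some a} +
      card {p\<in>P. p ! i \<noteq> None \<and> p ! i \<noteq> Some a}"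
    using subcube_partition_finite by (subst card_Un_disjoint[symmetric]) auto
  then show ?thesis using card_restrict_coord[OF assms] by simp
qed

lemma image_fixing_other_values:
  assumes "i \<in> fixed_coords n P"
  shows "(\<lambda>p. p ! i) ` {p\<in>P. p ! i \<noteq> None \<and> p ! i \<noteq> Some a} = Some ` ({..<q} - {a})"
proof -
  have "{p\<in>P. p ! i \<noteq> None \<and> p ! i \<noteq> Some a} = {p\<in>P. p ! i \<noteq> None} - {p. p ! i = Some a}"
    by blast
  then have "(\<lambda>p. p ! i) ` {p\<in>P. p ! i \<noteq> None \<and> p ! i \<noteq> Some a} =
      (\<lambda>p. p ! i) ` {p\<in>P. p ! i \<noteq> None} - {Some a}"
    by auto
  then show ?thesis using subcube_partition_takes_all_values[OF assms] by auto
qed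

lemma card_fixing_other_values_ge:
  assumes "i \<in> fixed_coords n P" "a < q"
  shows "q - 1 \<le> card {p\<in>P. p ! i \<noteq> None \<and> p ! i \<noteq> Some a}"
proof -
  have "q - 1 = card ((\<lambda>p. p ! i) ` {p\<in>P. p ! i \<noteq> None \<and> p ! i \<noteq> Some a})"
    using image_fixing_other_values[OF assms(1)] assms(2) by (simp add: card_image)
  also have "\<dots> \<le> card {p\<in>P. p ! i \<noteq> None \<and> p ! i \<noteq> Some a}"
    using subcube_partition_finite by (simp add: card_image_le)
  finally show ?thesis .
qed

text \<open>A coordinate fixed by the fewest cubes survives in every restriction to a face of it.\<close>
lemma exists_splitting_coord:
  assumes "fixed_coords n P \<noteq> {}"
  obtains i where "i \<in> fixed_coords n P"
    "\<And>a. a < q \<Longrightarrow> fixed_coords n (restrict_coord i a P) = fixed_coords n P - {i}"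
proof -
  define N where "N j = card {p\<in>P. p ! j \<noteq> None}" for j
  obtain i where i: "i \<in> fixed_coords n P" "\<forall>j\<in>fixed_coords n P. N i \<le> N j"
    using ex_has_least_nat[of "\<lambda>j. j \<in> fixed_coords n P" _ N] assms by blast
  have "fixed_coords n P - {i} \<subseteq> fixed_coords n (restrict_coord i a P)" if a: "a < q" for a
  proof
    fix k assume k: "k \<in> fixed_coords n P - {i}"
    show "k \<in> fixed_coords n (restrict_coord i a P)"
    proof (rule ccontr)
      assume "k \<notin> fixed_coords n (restrict_coord i a P)"
      then have "\<forall>p\<in>P. p ! k \<noteq> None \<longrightarrow> p ! i \<noteq> None \<and> p ! i \<noteq> Some a"
        using k unfolding fixed_coords_restrict_coord by (auto simp: fixed_coords_def)
      then have "{p\<in>P. p ! k \<noteq> None} \<subseteq> {p\<in>P. p ! i \<noteq> None \<and> p ! i \<noteq> Some a}"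
        by blast
      moreover obtain pa where "pa \<in> P" "pa ! i = Some a"
        using subcube_partition_obtain_value[OF i(1) a] .
      then have "{p\<in>P. p ! i \<noteq> None \<and> p ! i \<noteq> Some a} \<subset> {p\<in>P. p ! i \<noteq> None}" by auto
      ultimately have "{p\<in>P. p ! k \<noteq> None} \<subset> {p\<in>P. p ! i \<noteq> None}" by blast
      then have "N k < N i"
        unfolding N_def using subcube_partition_finite by (simp add: psubset_card_mono)
      then show False using i k by force
    qed
  qed
  moreover have "fixed_coords n (restrict_coord i a P) \<subseteq> fixed_coords n P - {i}" for a
    unfolding fixed_coords_restrict_coord by (auto simp: fixed_coords_def)
  ultimately show ?thesis using that i(1) by blast
qed

lemma cube_set_list_update_subset:
  assumes p: "p \<in> P" "p ! i = Some b" and p0: "p0 \<in> P" "p0 ! i = Some a"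
    and i: "i < n" and b: "b < q"
    and unique: "\<forall>p'\<in>P. p' ! i = Some a \<longrightarrow> p' = p0"
  shows "cube_set q (p[i := Some a]) \<subseteq> cube_set q p0"
proof
  fix x assume x: "x \<in> cube_set q (p[i := Some a])"
  have lp: "length p = n" using subcube_partition_length[OF p(1)] .
  have xa: "x ! i = a" using x lp i by (auto simp: mem_cube_set)
  have xb: "x[i := b] \<in> cube_set q p"
    by (rule list_update_mem_cube_set[OF x]) (use p(2) b in auto)
  obtain p'' where p'': "p'' \<in> P" "x \<in> cube_set q p''"
    using subcube_partition_cover cube_set_subset_Zq_vecs x lp by fastforce
  show "x \<in> cube_set q p0"
  proof (cases "p'' ! i")
    case None
    then have "x[i := b] \<in> cube_set q p''" using list_update_mem_cube_set[OF p''(2)] b by blast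
    then have "p'' = p" using subcube_partition_unique[OF p''(1) p(1)] xb by blast
    then show ?thesis using None p(2) by simp
  next
    case (Some c)
    then have "c = a"
      using p''(2) xa i subcube_partition_length[OF p''(1)] by (auto simp: mem_cube_set)
    then show ?thesis using unique p'' Some by blast
  qed
qed

end

lemma finite_fixed_coords: "finite (fixed_coords n P)"
  unfolding fixed_coords_def by simp

lemma subcube_partition_full_dim:
  assumes "subcube_partition q n P" "0 < q" "\<forall>p\<in>P. cube_dim p = n"
  shows "P = {replicate n None}"
proof -
  have "p = replicate n None" if "p \<in> P" for p
    using assms(3) that cube_dim_eq_length_iff[of p] subcube_partition_length[OF assms(1) that]
    by (simp add: list_eq_iff_nth_eq)
  then show ?thesis using subcube_partition_nonempty[OF assms(1,2)] by fastforce
qed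

lemma fixed_coords_ne_empty:
  assumes P: "subcube_partition q n P" and "0 < q" and dim: "\<forall>p\<in>P. cube_dim p < n"
  shows "fixed_coords n P \<noteq> {}"
proof -
  obtain p where p: "p \<in> P" using subcube_partition_nonempty[OF P \<open>0 < q\<close>] by blast
  then have "cube_dim p \<noteq> length p" using dim subcube_partition_length[OF P p] by force
  then obtain k where "k < n" "p ! k \<noteq> None"
    using cube_dim_eq_length_iff subcube_partition_length[OF P p] by auto
  then show ?thesis using p unfolding fixed_coords_def by blast
qed

section \<open>The lower bound on the number of cubes and its equality case\<close>

theorem card_subcube_partition_ge:
  assumes "0 < q" and "subcube_partition q n P"
  shows "1 + (q - 1) * card (fixed_coords n P) \<le> card P"
  using assms(2)
proof (induction "card (fixed_coords n P)" arbitrary: P)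
  case 0
  then have "P \<noteq> {}" "finite P"
    using subcube_partition_nonempty subcube_partition_finite assms(1) by blast+
  then show ?case using 0 by (simp add: Suc_le_eq card_gt_0_iff)
next
  case (Suc k)
  then have "fixed_coords n P \<noteq> {}" by auto
  then obtain i where i: "i \<in> fixed_coords n P"
    and restr: "fixed_coords n (restrict_coord i 0 P) = fixed_coords n P - {i}"
    using exists_splitting_coord[OF Suc.prems] assms(1) by metis
  have "i < n" using i unfolding fixed_coords_def by simp
  have "card (fixed_coords n (restrict_coord i 0 P)) = k"
    using restr Suc.hyps(2) i finite_fixed_coords by simp
  then have "1 + (q - 1) * k \<le> card (restrict_coord i 0 P)"
    using Suc.hyps(1) subcube_partition_restrict_coord[OF Suc.prems assms(1) \<open>i < n\<close>] by metis
  moreover have "q - 1 \<le> card {p\<in>P. p ! i \<noteq> None \<and> p ! i \<noteq> Some 0}"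
    using card_fixing_other_values_ge[OF Suc.prems i assms(1)] .
  moreover have "(q - 1) * card (fixed_coords n P) = (q - 1) * k + (q - 1)"
    by (simp flip: Suc.hyps(2))
  ultimately show ?case
    using card_split_restrict_coord[OF Suc.prems assms(1), of i] by linarith
qed

context
  fixes q n i :: nat and P :: "nat option list set"
  assumes q: "2 \<le> q" and P: "subcube_partition q n P"
    and tight: "card P = 1 + (q - 1) * card (fixed_coords n P)"
    and i: "i \<in> fixed_coords n P"
    and restr: "\<And>a. a < q \<Longrightarrow> fixed_coords n (restrict_coord i a P) = fixed_coords n P - {i}"
begin

lemma tight_restrict_splitting_coord:
  assumes a: "a < q"
  shows "card (restrict_coord i a P) = 1 + (q - 1) * card (fixed_coords n P - {i})"
    and "card {p\<in>P. p ! i \<noteq> None \<and> p ! i \<noteq> Some a} = q - 1"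
proof -
  have "i < n" using i unfolding fixed_coords_def by simp
  have "1 + (q - 1) * card (fixed_coords n P - {i}) \<le> card (restrict_coord i a P)"
    using card_subcube_partition_ge[OF _ subcube_partition_restrict_coord[OF P a \<open>i < n\<close>]]
      restr[OF a] q by simp
  moreover have "q - 1 \<le> card {p\<in>P. p ! i \<noteq> None \<and> p ! i \<noteq> Some a}"
    using card_fixing_other_values_ge[OF P i a] .
  moreover have "card (fixed_coords n P) = Suc (card (fixed_coords n P - {i}))"
    using i finite_fixed_coords by (metis card_Suc_Diff1)
  then have
    "(q - 1) * card (fixed_coords n P) = (q - 1) * card (fixed_coords n P - {i}) + (q - 1)"
    by simp
  ultimately show "card (restrict_coord i a P) = 1 + (q - 1) * card (fixed_coords n P - {i})"
    and "card {p\<in>P. p ! i \<noteq> None \<and> p ! i \<noteq> Some a} = q - 1"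
    using card_split_restrict_coord[OF P a, of i] tight by linarith+
qed

lemma tight_unique_cube_with_value:
  assumes p: "p1 \<in> P" "p2 \<in> P" "p1 ! i = Some b" "p2 ! i = Some b"
  shows "p1 = p2"
proof -
  define a where "a = (if b = 0 then 1 else 0 :: nat)"
  have "a < q" "b \<noteq> a" using q by (auto simp: a_def)
  let ?X = "{p\<in>P. p ! i \<noteq> None \<and> p ! i \<noteq> Some a}"
  have "card ((\<lambda>p. p ! i) ` ?X) = card ?X"
    using tight_restrict_splitting_coord(2)[OF \<open>a < q\<close>] image_fixing_other_values[OF P i, of a]
      \<open>a < q\<close> by (simp add: card_image)
  then have "inj_on (\<lambda>p. p ! i) ?X"
    using subcube_partition_finite[OF P] by (simp add: eq_card_imp_inj_on)
  moreover have "p1 \<in> ?X" "p2 \<in> ?X" using p \<open>b \<noteq> a\<close> by auto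
  ultimately show ?thesis using p by (metis (no_types, lifting) inj_onD)
qed

lemma tight_single_fixed_coord:
  assumes "fixed_coords n P = {i}"
  shows "\<forall>p\<in>P. p ! i \<noteq> None"
proof -
  have "q = card ((\<lambda>p. p ! i) ` {p\<in>P. p ! i \<noteq> None})"
    using subcube_partition_takes_all_values[OF P i] by (simp add: card_image)
  also have "\<dots> \<le> card {p\<in>P. p ! i \<noteq> None}"
    using subcube_partition_finite[OF P] by (simp add: card_image_le)
  finally have "card P \<le> card {p\<in>P. p ! i \<noteq> None}"
    using tight assms q by simp
  then have "{p\<in>P. p ! i \<noteq> None} = P"
    using subcube_partition_finite[OF P] by (intro card_seteq) auto
  then show ?thesis by blast
qed

text \<open>A cube fixing i to b \<noteq> 0, moved to the face x_i = 0, lies inside the unique cube fixing i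
  to 0; so that cube's fixed coordinates are fixed in every cube.\<close>
lemma tight_lift_common_fixed_coord:
  assumes r: "r < n" "r \<noteq> i" and common: "\<forall>p\<in>restrict_coord i 0 P. p ! r \<noteq> None"
  shows "\<forall>p\<in>P. p ! r \<noteq> None"
proof
  have "i < n" using i unfolding fixed_coords_def by simp
  have face_0: "p ! r \<noteq> None" if "p \<in> P" "p ! i = None \<or> p ! i = Some 0" for p
  proof -
    have "p[i := None] \<in> restrict_coord i 0 P" using that unfolding restrict_coord_def by blast
    then show ?thesis using common r(2) by force
  qed
  obtain p0 where p0: "p0 \<in> P" "p0 ! i = Some 0"
    using subcube_partition_obtain_value[OF P i, of 0] q by auto
  fix p assume p: "p \<in> P"
  show "p ! r \<noteq> None"
  proof (cases "p ! i = None \<or> p ! i = Some 0")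
    case False
    then obtain b where b: "p ! i = Some b" by auto
    have "b < q" using subcube_partition_value_less[OF P p \<open>i < n\<close> b] .
    have "cube_set q (p[i := Some 0]) \<subseteq> cube_set q p0"
      using cube_set_list_update_subset[OF P p b p0 \<open>i < n\<close> \<open>b < q\<close>]
        tight_unique_cube_with_value p0 by blast
    moreover obtain v where "p0 ! r = Some v" using face_0 p0 by auto
    moreover have "is_subcube_pat q n (p[i := Some 0])"
      using is_subcube_pat_update_Some subcube_partition_pat[OF P p] q by simp
    ultimately have "p[i := Some 0] ! r = Some v"
      using cube_set_subset_imp_fixed q r(1) subcube_partition_length[OF P p0(1)] by blast
    then show ?thesis using r(2) by simp
  qed (use face_0 p in blast)
qed

end

theorem tight_subcube_partition_common_fixed_coord:
  assumes q: "2 \<le> q" and "subcube_partition q n P"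
    and "card P = 1 + (q - 1) * card (fixed_coords n P)" and "fixed_coords n P \<noteq> {}"
  obtains r where "r \<in> fixed_coords n P" "\<forall>p\<in>P. p ! r \<noteq> None"
  using assms(2-4)
proof (induction "card (fixed_coords n P)" arbitrary: P thesis rule: less_induct)
  case less
  note P = less.prems(2) and tight = less.prems(3)
  obtain i where i: "i \<in> fixed_coords n P"
    and restr: "\<And>a. a < q \<Longrightarrow> fixed_coords n (restrict_coord i a P) = fixed_coords n P - {i}"
    using exists_splitting_coord[OF P less.prems(4)] by metis
  have "i < n" using i unfolding fixed_coords_def by simp
  show ?case
  proof (cases "fixed_coords n P - {i} = {}")
    case True
    then show ?thesis using tight_single_fixed_coord[OF q P tight i restr] less.prems(1) i by blast
  next
    case False
    have "card (fixed_coords n P - {i}) < card (fixed_coords n P)"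
      using i finite_fixed_coords by (rule card_Diff1_less[rotated])
    moreover have "subcube_partition q n (restrict_coord i 0 P)"
      using subcube_partition_restrict_coord[OF P _ \<open>i < n\<close>] q by simp
    ultimately obtain r where r: "r \<in> fixed_coords n P - {i}"
        "\<forall>p\<in>restrict_coord i 0 P. p ! r \<noteq> None"
      using less.hyps[of "restrict_coord i 0 P"] restr[of 0]
        tight_restrict_splitting_coord(1)[OF q P tight i restr, of 0] False q by auto
    then have "r < n" "r \<noteq> i" unfolding fixed_coords_def by auto
    then show ?thesis
      using tight_lift_common_fixed_coord[OF q P tight i restr _ _ r(2)] less.prems(1) r(1) by blast
  qed
qed

context
  fixes q n r :: nat and P :: "nat option list set"
  assumes P: "subcube_partition q n P" and r: "r < n" and common: "\<forall>p\<in>P. p ! r \<noteq> None"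
begin

lemma faces_of_common_coord: "{p\<in>P. p ! r = None \<or> p ! r = Some c} = {p\<in>P. p ! r = Some c}"
  using common by auto

lemma restrict_common_coord: "restrict_coord r c P = (\<lambda>p. p[r := None]) ` {p\<in>P. p ! r = Some c}"
  unfolding restrict_coord_def faces_of_common_coord ..

lemma subcube_partition_eq_Union_faces: "P = (\<Union>c<q. {p\<in>P. p ! r = Some c})"
  using common subcube_partition_value_less[OF P _ r] by blast

lemma subcube_partition_eq_Union_restrict:
  "P = (\<Union>c<q. (\<lambda>p. p[r := Some c]) ` restrict_coord r c P)"
proof -
  have update_id: "p[r := Some c] = p" if "p ! r = Some c" for p c
    using that by (metis list_update_id)
  have "(\<lambda>p. p[r := Some c]) ` restrict_coord r c P = {p\<in>P. p ! r = Some c}" for c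
    unfolding restrict_common_coord image_image by (auto simp: image_iff update_id)
  then show ?thesis using subcube_partition_eq_Union_faces by simp
qed

lemma card_eq_sum_restrict: "card P = (\<Sum>c<q. card (restrict_coord r c P))"
proof -
  have "card P = (\<Sum>c<q. card {p\<in>P. p ! r = Some c})"
    by (subst subcube_partition_eq_Union_faces, rule card_UN_disjoint)
      (use subcube_partition_finite[OF P] in auto)
  then show ?thesis using card_restrict_coord[OF P] by (simp add: faces_of_common_coord)
qed

lemma fixed_coords_eq_Union_restrict:
  assumes "0 < q"
  shows "fixed_coords n P = insert r (\<Union>c<q. fixed_coords n (restrict_coord r c P))"
proof -
  have r_fixed: "r \<in> fixed_coords n P"
    using subcube_partition_nonempty[OF P assms] common r unfolding fixed_coords_def by auto
  have restr: "fixed_coords n (restrict_coord r c P) =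
      {k. k < n \<and> k \<noteq> r \<and> (\<exists>p\<in>P. p ! r = Some c \<and> p ! k \<noteq> None)}" for c
    unfolding fixed_coords_restrict_coord[OF P] using common by auto
  show ?thesis
  proof (intro equalityI subsetI)
    fix k assume k: "k \<in> fixed_coords n P"
    show "k \<in> insert r (\<Union>c<q. fixed_coords n (restrict_coord r c P))"
    proof (cases "k = r")
      case False
      obtain p where p: "p \<in> P" "k < n" "p ! k \<noteq> None" using k unfolding fixed_coords_def by blast
      then obtain c where "c < q" "p ! r = Some c"
        using common subcube_partition_value_less[OF P _ r] by blast
      then show ?thesis using p False unfolding restr by blast
    qed simp
  next
    fix k assume "k \<in> insert r (\<Union>c<q. fixed_coords n (restrict_coord r c P))"
    then show "k \<in> fixed_coords n P" using r_fixed unfolding restr by (auto simp: fixed_coords_def)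
  qed
qed

lemma cube_dim_restrict_common_coord:
  assumes "\<forall>p\<in>P. cube_dim p + Suc m = n"
  shows "\<forall>p\<in>restrict_coord r c P. cube_dim p + m = n"
  using assms common cube_dim_list_update_None r subcube_partition_length[OF P]
  unfolding restrict_common_coord by fastforce

end

lemma tight_restrict_common_coord:
  assumes q: "2 \<le> q" and P: "subcube_partition q n P" and r: "r < n"
    and common: "\<forall>p\<in>P. p ! r \<noteq> None"
    and tight: "card P = 1 + (q - 1) * card (fixed_coords n P)"
  shows "\<And>c. c < q \<Longrightarrow>
      card (restrict_coord r c P) = 1 + (q - 1) * card (fixed_coords n (restrict_coord r c P))"
    and "\<And>c1 c2. c1 < q \<Longrightarrow> c2 < q \<Longrightarrow> c1 \<noteq> c2 \<Longrightarrow>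
      fixed_coords n (restrict_coord r c1 P) \<inter> fixed_coords n (restrict_coord r c2 P) = {}"
proof -
  let ?U = "\<lambda>c. fixed_coords n (restrict_coord r c P)"
  let ?lower = "\<lambda>c. 1 + (q - 1) * card (?U c)"
  have ge: "?lower c \<le> card (restrict_coord r c P)" if "c < q" for c
    using card_subcube_partition_ge subcube_partition_restrict_coord[OF P that r] q by simp
  have "r \<notin> (\<Union>c<q. ?U c)" by (simp add: fixed_coords_restrict_coord[OF P])
  moreover have "fixed_coords n P = insert r (\<Union>c<q. ?U c)"
    using fixed_coords_eq_Union_restrict[OF P r common] q by simp
  ultimately have card_J: "card (fixed_coords n P) = Suc (card (\<Union>c<q. ?U c))"
    using finite_fixed_coords by (simp add: card_insert_disjoint)
  have sum_lower: "(\<Sum>c<q. ?lower c) = q + (q - 1) * (\<Sum>c<q. card (?U c))"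
    unfolding sum.distrib sum_distrib_left by simp
  have "q + (q - 1) * (\<Sum>c<q. card (?U c)) = (\<Sum>c<q. ?lower c)" using sum_lower ..
  also have "\<dots> \<le> card P"
    unfolding card_eq_sum_restrict[OF P r common] using ge by (intro sum_mono) simp
  also have card_P: "card P = q + (q - 1) * card (\<Union>c<q. ?U c)"
    using tight card_J q by simp
  finally have "(\<Sum>c<q. card (?U c)) \<le> card (\<Union>c<q. ?U c)" using q by simp
  then have sum_eq: "card (\<Union>c<q. ?U c) = (\<Sum>c<q. card (?U c))"
    using card_UN_le[of "{..<q}" ?U] by simp
  show "?U c1 \<inter> ?U c2 = {}" if "c1 < q" "c2 < q" "c1 \<noteq> c2" for c1 c2
    using card_UN_eq_sum_imp_disjoint[OF _ _ sum_eq] finite_fixed_coords that by simp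
  show "card (restrict_coord r c P) = ?lower c" if c: "c < q" for c
  proof (rule ccontr)
    assume "card (restrict_coord r c P) \<noteq> ?lower c"
    then have "?lower c < card (restrict_coord r c P)" using ge[OF c] by linarith
    then have "(\<Sum>c<q. ?lower c) < (\<Sum>c<q. card (restrict_coord r c P))"
      using ge c by (intro sum_strict_mono_ex1) auto
    then show False
      using card_eq_sum_restrict[OF P r common] card_P sum_lower unfolding sum_eq by linarith
  qed
qed

section \<open>Tree partitions\<close>

definition tree_nodes :: "nat \<Rightarrow> nat \<Rightarrow> nat list set" where
  "tree_nodes q m = {u. length u < m \<and> set u \<subseteq> {..<q}}"

definition tree_leaves :: "nat \<Rightarrow> nat \<Rightarrow> nat list set" where
  "tree_leaves q m = {w. length w = m \<and> set w \<subseteq> {..<q}}"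

text \<open>Coordinate j labels the node g j of the complete q-ary tree of depth m. The cube of the
  leaf w fixes the coordinates labelling the proper prefixes u of w, each to the letter of w that
  follows u.\<close>
definition tree_cube :: "nat \<Rightarrow> nat set \<Rightarrow> (nat \<Rightarrow> nat list) \<Rightarrow> nat list \<Rightarrow> nat option list" where
  "tree_cube n J g w =
     map (\<lambda>j. if j \<in> J \<and> strict_prefix (g j) w then Some (w ! length (g j)) else None) [0..<n]"

definition tree_partition ::
    "nat \<Rightarrow> nat \<Rightarrow> nat set \<Rightarrow> (nat \<Rightarrow> nat list) \<Rightarrow> nat \<Rightarrow> nat option list set" where
  "tree_partition q n J g m = tree_cube n J g ` tree_leaves q m"

lemma length_tree_cube [simp]: "length (tree_cube n J g w) = n"
  unfolding tree_cube_def by simp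

lemma nth_tree_cube:
  "j < n \<Longrightarrow> tree_cube n J g w ! j =
     (if j \<in> J \<and> strict_prefix (g j) w then Some (w ! length (g j)) else None)"
  unfolding tree_cube_def by simp

lemma tree_leaves_Suc: "tree_leaves q (Suc m) = (\<Union>c<q. (#) c ` tree_leaves q m)"
  unfolding tree_leaves_def by (auto simp: length_Suc_conv)

lemma tree_nodes_Suc: "tree_nodes q (Suc m) = insert [] (\<Union>c<q. (#) c ` tree_nodes q m)"
proof -
  have "u \<in> tree_nodes q (Suc m) \<longleftrightarrow> u \<in> insert [] (\<Union>c<q. (#) c ` tree_nodes q m)" for u
    unfolding tree_nodes_def by (cases u) auto
  then show ?thesis by blast
qed

lemma append_mem_tree_leaves:
  assumes "u \<in> tree_nodes q m" "c < q"
  shows "u @ c # replicate (m - Suc (length u)) 0 \<in> tree_leaves q m"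
  using assms unfolding tree_nodes_def tree_leaves_def by auto

lemma strict_prefix_leaf_in_tree_nodes:
  assumes "w \<in> tree_leaves q m" "strict_prefix u w"
  shows "u \<in> tree_nodes q m"
proof -
  have "length u < length w" "set u \<subseteq> set w"
    using assms(2) by (simp_all add: prefix_length_less set_mono_prefix prefix_order.less_imp_le)
  then show ?thesis using assms(1) unfolding tree_leaves_def tree_nodes_def by auto
qed

lemma card_tree_leaves: "card (tree_leaves q m) = q ^ m"
  using card_lists_length_eq[of "{..<q}" m] unfolding tree_leaves_def by (simp add: conj_commute)

lemma finite_tree_nodes: "finite (tree_nodes q m)"
  by (rule finite_subset[OF _ finite_lists_length_le[of "{..<q}" m]]) (auto simp: tree_nodes_def)

lemma card_tree_nodes:
  assumes "0 < q"
  shows "(q - 1) * card (tree_nodes q m) + 1 = q ^ m"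
proof (induction m)
  case 0
  then show ?case by (simp add: tree_nodes_def)
next
  case (Suc m)
  have "tree_nodes q (Suc m) = tree_nodes q m \<union> tree_leaves q m"
    unfolding tree_nodes_def tree_leaves_def by auto
  moreover have "tree_nodes q m \<inter> tree_leaves q m = {}"
    unfolding tree_nodes_def tree_leaves_def by auto
  moreover have "finite (tree_leaves q m)"
    by (rule finite_subset[OF _ finite_lists_length_eq[of "{..<q}" m]]) (auto simp: tree_leaves_def)
  ultimately have "card (tree_nodes q (Suc m)) = card (tree_nodes q m) + q ^ m"
    using finite_tree_nodes card_tree_leaves by (simp add: card_Un_disjoint)
  then show ?case using Suc.IH assms by (cases q) (simp_all add: algebra_simps)
qed

text \<open>The labelling of the tree of depth m + 1 whose root is labelled r and whose c-th subtree is
  labelled by G c on U c.\<close>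
definition glue_labelling ::
    "nat \<Rightarrow> nat \<Rightarrow> (nat \<Rightarrow> nat set) \<Rightarrow> (nat \<Rightarrow> nat \<Rightarrow> nat list) \<Rightarrow> nat \<Rightarrow> nat list" where
  "glue_labelling q r U G j =
     (if j = r then [] else let c = (THE c. c < q \<and> j \<in> U c) in c # G c j)"

context
  fixes q r m :: nat and U :: "nat \<Rightarrow> nat set" and G :: "nat \<Rightarrow> nat \<Rightarrow> nat list"
  assumes r_notin: "\<And>c. c < q \<Longrightarrow> r \<notin> U c"
    and disjoint: "\<And>c1 c2. c1 < q \<Longrightarrow> c2 < q \<Longrightarrow> c1 \<noteq> c2 \<Longrightarrow> U c1 \<inter> U c2 = {}"
    and G: "\<And>c. c < q \<Longrightarrow> bij_betw (G c) (U c) (tree_nodes q m)"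
begin

lemma glue_labelling_eq: "c < q \<Longrightarrow> j \<in> U c \<Longrightarrow> glue_labelling q r U G j = c # G c j"
proof -
  assume c: "c < q" "j \<in> U c"
  then have "(THE c. c < q \<and> j \<in> U c) = c" using disjoint by blast
  then show ?thesis using c r_notin unfolding glue_labelling_def by auto
qed

lemma bij_betw_glue_labelling:
  "bij_betw (glue_labelling q r U G) (insert r (\<Union>c<q. U c)) (tree_nodes q (Suc m))"
  unfolding bij_betw_def
proof
  have "glue_labelling q r U G ` U c = (#) c ` tree_nodes q m" if "c < q" for c
    using glue_labelling_eq[OF that] bij_betw_imp_surj_on[OF G[OF that]]
    by (metis (no_types, lifting) image_cong image_image)
  moreover have "glue_labelling q r U G r = []" by (simp add: glue_labelling_def)
  ultimately show "glue_labelling q r U G ` insert r (\<Union>c<q. U c) = tree_nodes q (Suc m)"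
    unfolding tree_nodes_Suc image_insert image_UN by simp
next
  show "inj_on (glue_labelling q r U G) (insert r (\<Union>c<q. U c))"
  proof (rule inj_onI)
    fix j1 j2
    assume j: "j1 \<in> insert r (\<Union>c<q. U c)" "j2 \<in> insert r (\<Union>c<q. U c)"
      and eq: "glue_labelling q r U G j1 = glue_labelling q r U G j2"
    show "j1 = j2"
    proof (cases "j1 = r \<or> j2 = r")
      case True
      have "glue_labelling q r U G j \<noteq> []" if "j \<in> (\<Union>c<q. U c)" for j
        using that glue_labelling_eq by fastforce
      moreover have "glue_labelling q r U G r = []" by (simp add: glue_labelling_def)
      ultimately show ?thesis using True j eq by (metis insertE)
    next
      case False
      then obtain c1 c2 where c: "c1 < q" "j1 \<in> U c1" "c2 < q" "j2 \<in> U c2" using j by blast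
      then have "c1 # G c1 j1 = c2 # G c2 j2"
        using eq by (simp only: glue_labelling_eq[symmetric])
      then have "c1 = c2" "G c1 j1 = G c1 j2" by auto
      then show ?thesis using c G[OF c(1)] by (metis bij_betw_imp_inj_on inj_onD)
    qed
  qed
qed

lemma tree_cube_glue_labelling:
  assumes c: "c < q"
  shows "tree_cube n (insert r (\<Union>c<q. U c)) (glue_labelling q r U G) (c # w) =
    (tree_cube n (U c) (G c) w)[r := Some c]"
proof (rule nth_equalityI)
  fix j assume "j < length (tree_cube n (insert r (\<Union>c<q. U c)) (glue_labelling q r U G) (c # w))"
  then have j: "j < n" by simp
  consider "j = r" | c' where "j \<noteq> r" "c' < q" "j \<in> U c'" | "j \<notin> insert r (\<Union>c<q. U c)"
    by blast
  then show "tree_cube n (insert r (\<Union>c<q. U c)) (glue_labelling q r U G) (c # w) ! j =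
      (tree_cube n (U c) (G c) w)[r := Some c] ! j"
  proof cases
    case 1
    then show ?thesis using j by (simp add: nth_tree_cube glue_labelling_def)
  next
    case (2 c')
    then show ?thesis
      using j c disjoint[OF c 2(2)] glue_labelling_eq[OF 2(2,3)] by (auto simp: nth_tree_cube)
  next
    case 3
    then show ?thesis using j c by (auto simp: nth_tree_cube)
  qed
qed simp

lemma tree_partition_glue_labelling:
  "tree_partition q n (insert r (\<Union>c<q. U c)) (glue_labelling q r U G) (Suc m) =
    (\<Union>c<q. (\<lambda>p. p[r := Some c]) ` tree_partition q n (U c) (G c) m)"
  unfolding tree_partition_def tree_leaves_Suc image_UN image_image
  by (rule SUP_cong[OF refl]) (simp add: tree_cube_glue_labelling)

end

section \<open>Extremal partitions are tree partitions\<close>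

lemma tree_partition_0: "tree_partition q n J g 0 = {replicate n None}"
proof -
  have "tree_leaves q 0 = {[]}" by (auto simp: tree_leaves_def)
  then show ?thesis by (simp add: tree_partition_def tree_cube_def map_replicate_const)
qed

theorem tight_subcube_partition_is_tree_partition:
  assumes q: "2 \<le> q"
  shows "subcube_partition q n P \<Longrightarrow> \<forall>p\<in>P. cube_dim p + m = n \<Longrightarrow>
    card P = 1 + (q - 1) * card (fixed_coords n P) \<Longrightarrow>
    \<exists>g. bij_betw g (fixed_coords n P) (tree_nodes q m) \<and>
      P = tree_partition q n (fixed_coords n P) g m"
proof (induction m arbitrary: P)
  case 0
  then have "P = {replicate n None}" using subcube_partition_full_dim q by simp
  moreover have "fixed_coords n {replicate n None} = {}" "tree_nodes q 0 = {}"
    by (simp_all add: fixed_coords_def tree_nodes_def)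
  ultimately show ?case by (simp add: tree_partition_0 bij_betw_def)
next
  case (Suc m)
  note P = Suc.prems(1) and tight = Suc.prems(3)
  have "\<forall>p\<in>P. cube_dim p < n" using Suc.prems(2) by auto
  then have "fixed_coords n P \<noteq> {}" using fixed_coords_ne_empty[OF P] q by simp
  then obtain r where "r \<in> fixed_coords n P" and common: "\<forall>p\<in>P. p ! r \<noteq> None"
    using tight_subcube_partition_common_fixed_coord[OF q P tight] by blast
  then have r: "r < n" unfolding fixed_coords_def by simp
  define U where "U c = fixed_coords n (restrict_coord r c P)" for c
  have "\<exists>G. bij_betw G (U c) (tree_nodes q m) \<and> restrict_coord r c P = tree_partition q n (U c) G m"
    if c: "c < q" for c
    using Suc.IH[OF subcube_partition_restrict_coord[OF P c r]
        cube_dim_restrict_common_coord[OF P r common Suc.prems(2)]]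
      tight_restrict_common_coord(1)[OF q P r common tight c] unfolding U_def by blast
  then obtain G where G: "\<And>c. c < q \<Longrightarrow> bij_betw (G c) (U c) (tree_nodes q m)"
    and P_c: "\<And>c. c < q \<Longrightarrow> restrict_coord r c P = tree_partition q n (U c) (G c) m"
    by metis
  have J: "fixed_coords n P = insert r (\<Union>c<q. U c)"
    using fixed_coords_eq_Union_restrict[OF P r common] q unfolding U_def by simp
  have r_notin: "r \<notin> U c" if "c < q" for c by (simp add: U_def fixed_coords_restrict_coord[OF P])
  have disjoint: "U c1 \<inter> U c2 = {}" if "c1 < q" "c2 < q" "c1 \<noteq> c2" for c1 c2
    using tight_restrict_common_coord(2)[OF q P r common tight that] unfolding U_def .
  have "P = (\<Union>c<q. (\<lambda>p. p[r := Some c]) ` tree_partition q n (U c) (G c) m)"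
    using subcube_partition_eq_Union_restrict[OF P r common] P_c by simp
  also have "\<dots> = tree_partition q n (fixed_coords n P) (glue_labelling q r U G) (Suc m)"
    unfolding J using tree_partition_glue_labelling[where U = U and G = G, OF r_notin disjoint G]
    by simp
  finally show ?case
    unfolding J using bij_betw_glue_labelling[where U = U and G = G, OF r_notin disjoint G] by blast
qed

context
  fixes q n m :: nat and g :: "nat \<Rightarrow> nat list"
  assumes bij: "bij_betw g {..<n} (tree_nodes q m)"
begin

lemma tree_node_label: "j < n \<Longrightarrow> g j \<in> tree_nodes q m"
  using bij bij_betwE by blast

lemma obtain_coord_labelling:
  assumes "u \<in> tree_nodes q m"
  obtains j where "j < n" "g j = u"
proof -
  have "u \<in> g ` {..<n}" using assms bij by (simp add: bij_betw_def)
  then show ?thesis using that by auto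
qed

lemma is_subcube_pat_tree_cube:
  assumes "w \<in> tree_leaves q m"
  shows "is_subcube_pat q n (tree_cube n {..<n} g w)"
  unfolding is_subcube_pat_def
proof (intro conjI allI impI)
  fix j v assume j: "j < n" and "tree_cube n {..<n} g w ! j = Some v"
  then have "strict_prefix (g j) w" "v = w ! length (g j)"
    by (auto simp: nth_tree_cube split: if_splits)
  then have "v \<in> set w" by (simp add: prefix_length_less)
  then show "v < q" using assms unfolding tree_leaves_def by auto
qed simp

lemma cube_dim_tree_cube:
  assumes w: "w \<in> tree_leaves q m"
  shows "cube_dim (tree_cube n {..<n} g w) + m = n"
proof -
  define F where "F = {j. j < n \<and> strict_prefix (g j) w}"
  have "bij_betw g F {u. strict_prefix u w}"
    unfolding bij_betw_def
  proof
    show "inj_on g F" using bij_betw_imp_inj_on[OF bij] unfolding F_def by (rule inj_on_subset) auto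
    show "g ` F = {u. strict_prefix u w}"
    proof (intro equalityI subsetI)
      fix u assume "u \<in> {u. strict_prefix u w}"
      then obtain j where "j < n" "g j = u"
        using obtain_coord_labelling strict_prefix_leaf_in_tree_nodes[OF w] by blast
      then show "u \<in> g ` F" using \<open>u \<in> {u. strict_prefix u w}\<close> unfolding F_def by blast
    qed (auto simp: F_def)
  qed
  then have "card F = m"
    using bij_betw_same_card card_strict_prefixes w unfolding tree_leaves_def by fastforce
  moreover have "{j. j < n \<and> tree_cube n {..<n} g w ! j = None} = {..<n} - F"
    unfolding F_def by (auto simp: nth_tree_cube)
  moreover have "F \<subseteq> {..<n}" unfolding F_def by auto
  ultimately show ?thesis
    unfolding cube_dim_def using card_mono[of "{..<n}" F]
    by (simp add: card_Diff_subset finite_subset)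
qed

lemma tree_cube_separates:
  assumes w: "w \<in> tree_leaves q m" and w': "w' \<in> tree_leaves q m" and "w \<noteq> w'"
  obtains j a b where "j < n" "a \<noteq> b"
    "tree_cube n {..<n} g w ! j = Some a" "tree_cube n {..<n} g w' ! j = Some b"
proof -
  have "length w = length w'" using w w' unfolding tree_leaves_def by simp
  then have "w \<parallel> w'" using \<open>w \<noteq> w'\<close> by (auto elim!: prefixE)
  then obtain u b bs c cs where bc: "b \<noteq> c" and "w = u @ b # bs" "w' = u @ c # cs"
    using parallel_decomp by blast
  then have "strict_prefix u w" "strict_prefix u w'" "w ! length u = b" "w' ! length u = c"
    by (auto intro: strict_prefixI')
  moreover obtain j where "j < n" "g j = u"
    using obtain_coord_labelling strict_prefix_leaf_in_tree_nodes[OF w] \<open>strict_prefix u w\<close> by blast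
  ultimately show ?thesis using that bc by (simp add: nth_tree_cube)
qed

lemma inj_on_tree_cube: "inj_on (tree_cube n {..<n} g) (tree_leaves q m)"
  by (rule inj_onI) (metis option.inject tree_cube_separates)

lemma card_tree_partition: "card (tree_partition q n {..<n} g m) = q ^ m"
  unfolding tree_partition_def using inj_on_tree_cube card_tree_leaves by (simp add: card_image)

text \<open>The leaf reached from the root by following, at each node u, the branch given by the value
  of x at the coordinate labelling u.\<close>
fun tree_walk :: "nat list \<Rightarrow> nat \<Rightarrow> nat list" where
  "tree_walk x 0 = []"
| "tree_walk x (Suc k) = tree_walk x k @ [x ! inv_into {..<n} g (tree_walk x k)]"

lemma length_tree_walk [simp]: "length (tree_walk x k) = k"
  by (induction k) auto

lemma take_tree_walk: "k \<le> K \<Longrightarrow> take k (tree_walk x K) = tree_walk x k"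
  by (induction K) (auto simp: le_Suc_eq)

lemma tree_walk_mem_tree_leaves:
  assumes x: "x \<in> Zq_vecs q n"
  shows "tree_walk x m \<in> tree_leaves q m"
proof -
  have "k \<le> m \<Longrightarrow> set (tree_walk x k) \<subseteq> {..<q}" for k
  proof (induction k)
    case (Suc k)
    then have "tree_walk x k \<in> tree_nodes q m" unfolding tree_nodes_def by simp
    then have "inv_into {..<n} g (tree_walk x k) < n"
      using bij_betw_inv_into[OF bij] bij_betwE by fastforce
    then show ?case using Suc x by (simp add: mem_Zq_vecs)
  qed simp
  then show ?thesis unfolding tree_leaves_def by simp
qed

lemma mem_cube_set_tree_walk:
  assumes x: "x \<in> Zq_vecs q n"
  shows "x \<in> cube_set q (tree_cube n {..<n} g (tree_walk x m))"
  unfolding mem_cube_set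
proof (intro conjI allI impI)
  show "length x = length (tree_cube n {..<n} g (tree_walk x m))" using x by (simp add: mem_Zq_vecs)
  fix j assume "j < length (tree_cube n {..<n} g (tree_walk x m))"
  then have j: "j < n" by simp
  show "x ! j < q" using x j by (simp add: mem_Zq_vecs)
  fix v assume "tree_cube n {..<n} g (tree_walk x m) ! j = Some v"
  then have pre: "strict_prefix (g j) (tree_walk x m)" and v: "v = tree_walk x m ! length (g j)"
    using j by (auto simp: nth_tree_cube split: if_splits)
  define k where "k = length (g j)"
  have "k < m" using pre prefix_length_less unfolding k_def by fastforce
  then have "g j = tree_walk x k"
    using pre take_tree_walk[of k m x] unfolding strict_prefix_iff_take k_def by simp
  then have "inv_into {..<n} g (tree_walk x k) = j"
    using bij_betw_inv_into_left[OF bij] j by fastforce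
  moreover have "tree_walk x m ! k = tree_walk x (Suc k) ! k"
    using take_tree_walk[of "Suc k" m x] \<open>k < m\<close> by (metis lessI nth_take Suc_leI)
  ultimately show "x ! j = v" using v unfolding k_def by (simp add: nth_append)
qed

lemma tree_partition_unique_cover:
  assumes x: "x \<in> Zq_vecs q n"
  shows "\<exists>!p. p \<in> tree_partition q n {..<n} g m \<and> x \<in> cube_set q p"
proof (rule ex1I)
  show "tree_cube n {..<n} g (tree_walk x m) \<in> tree_partition q n {..<n} g m \<and>
      x \<in> cube_set q (tree_cube n {..<n} g (tree_walk x m))"
    using tree_walk_mem_tree_leaves[OF x] mem_cube_set_tree_walk[OF x]
    unfolding tree_partition_def by blast
next
  fix p assume p: "p \<in> tree_partition q n {..<n} g m \<and> x \<in> cube_set q p"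
  then obtain w where w: "w \<in> tree_leaves q m" "p = tree_cube n {..<n} g w"
    unfolding tree_partition_def by blast
  show "p = tree_cube n {..<n} g (tree_walk x m)"
  proof (rule ccontr)
    assume "p \<noteq> tree_cube n {..<n} g (tree_walk x m)"
    then obtain j a b where "j < n" "a \<noteq> b" "p ! j = Some a"
        "tree_cube n {..<n} g (tree_walk x m) ! j = Some b"
      using tree_cube_separates[OF w(1) tree_walk_mem_tree_leaves[OF x]] w(2) by metis
    then show False
      using p mem_cube_set_tree_walk[OF x] by (auto simp: mem_cube_set)
  qed
qed

lemma tree_partition_fixes_coord:
  assumes "0 < q" "j < n"
  obtains p where "p \<in> tree_partition q n {..<n} g m" "p ! j \<noteq> None"
proof -
  define w where "w = g j @ 0 # replicate (m - Suc (length (g j))) 0"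
  have "w \<in> tree_leaves q m"
    using append_mem_tree_leaves tree_node_label assms unfolding w_def by blast
  moreover have "strict_prefix (g j) w" unfolding w_def by (rule strict_prefixI') simp
  ultimately have "tree_cube n {..<n} g w \<in> tree_partition q n {..<n} g m"
    "tree_cube n {..<n} g w ! j \<noteq> None"
    using assms(2) unfolding tree_partition_def by (simp_all add: nth_tree_cube)
  then show ?thesis using that by blast
qed

theorem aprim_partition_tree_partition:
  assumes "0 < q"
  shows "aprim_partition q n m (tree_partition q n {..<n} g m)"
  unfolding aprim_partition_def
proof (intro conjI ballI allI impI)
  fix p assume "p \<in> tree_partition q n {..<n} g m"
  then obtain w where w: "w \<in> tree_leaves q m" "p = tree_cube n {..<n} g w"
    unfolding tree_partition_def by blast
  then show "is_subcube_pat q n p" "cube_dim p + m = n"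
    using is_subcube_pat_tree_cube cube_dim_tree_cube by simp_all
next
  show "card (tree_partition q n {..<n} g m) = q ^ m" by (rule card_tree_partition)
next
  fix x assume "x \<in> Zq_vecs q n"
  then show "\<exists>!p. p \<in> tree_partition q n {..<n} g m \<and> x \<in> cube_set q p"
    by (rule tree_partition_unique_cover)
next
  fix j assume "j < n"
  then show "\<exists>p\<in>tree_partition q n {..<n} g m. p ! j \<noteq> None"
    using tree_partition_fixes_coord[OF assms] by metis
qed

end

section \<open>A tree partition determines its labelling\<close>

lemma strict_prefix_leaves_imp_iff_prefix:
  assumes q: "2 \<le> q" and u: "u \<in> tree_nodes q m"
  shows "(\<forall>w\<in>tree_leaves q m. strict_prefix u w \<longrightarrow> strict_prefix v w) \<longleftrightarrow> prefix v u"
proof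
  assume H: "\<forall>w\<in>tree_leaves q m. strict_prefix u w \<longrightarrow> strict_prefix v w"
  show "prefix v u"
  proof (rule ccontr)
    assume not_prefix: "\<not> prefix v u"
    define c where "c = (if v ! length u = 0 then 1 else 0 :: nat)"
    define w where "w = u @ c # replicate (m - Suc (length u)) 0"
    have "c < q" "c \<noteq> v ! length u" using q by (auto simp: c_def)
    then have "w \<in> tree_leaves q m" using append_mem_tree_leaves[OF u] unfolding w_def by blast
    moreover have "strict_prefix u w" unfolding w_def by (rule strict_prefixI') simp
    ultimately have "prefix v w" using H prefix_order.less_imp_le by blast
    moreover have "prefix (u @ [c]) w" unfolding w_def by simp
    ultimately have "prefix v (u @ [c]) \<or> prefix (u @ [c]) v" by (rule prefix_same_cases)
    then show False
      using not_prefix \<open>c \<noteq> v ! length u\<close> by (auto elim!: prefixE simp: nth_append)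
  qed
qed (auto intro: prefix_order.le_less_trans)

context
  fixes q n m :: nat and g :: "nat \<Rightarrow> nat list"
  assumes q: "2 \<le> q" and bij: "bij_betw g {..<n} (tree_nodes q m)"
begin

lemma fixing_cubes_subset_iff_prefix:
  assumes j: "j < n" and j': "j' < n"
  shows "{p\<in>tree_partition q n {..<n} g m. p ! j \<noteq> None} \<subseteq>
      {p\<in>tree_partition q n {..<n} g m. p ! j' \<noteq> None} \<longleftrightarrow> prefix (g j') (g j)"
  unfolding strict_prefix_leaves_imp_iff_prefix[OF q tree_node_label[OF bij j], symmetric]
proof
  assume sub: "{p\<in>tree_partition q n {..<n} g m. p ! j \<noteq> None} \<subseteq>
    {p\<in>tree_partition q n {..<n} g m. p ! j' \<noteq> None}"
  show "\<forall>w\<in>tree_leaves q m. strict_prefix (g j) w \<longrightarrow> strict_prefix (g j') w"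
  proof (intro ballI impI)
    fix w assume "w \<in> tree_leaves q m" "strict_prefix (g j) w"
    then have "tree_cube n {..<n} g w \<in> {p\<in>tree_partition q n {..<n} g m. p ! j \<noteq> None}"
      using j unfolding tree_partition_def by (simp add: nth_tree_cube)
    then show "strict_prefix (g j') w" using sub j' by (auto simp: nth_tree_cube split: if_splits)
  qed
qed (use j j' in \<open>auto simp: tree_partition_def nth_tree_cube split: if_splits\<close>)

lemma card_prefix_labels:
  assumes j: "j < n"
  shows "card {j'. j' < n \<and> prefix (g j') (g j)} = Suc (length (g j))"
proof -
  have "bij_betw g {j'. j' < n \<and> prefix (g j') (g j)} (set (prefixes (g j)))"
    unfolding bij_betw_def
  proof
    show "inj_on g {j'. j' < n \<and> prefix (g j') (g j)}"
      using bij_betw_imp_inj_on[OF bij] by (rule inj_on_subset) auto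
    show "g ` {j'. j' < n \<and> prefix (g j') (g j)} = set (prefixes (g j))"
    proof (intro equalityI subsetI)
      fix u assume "u \<in> set (prefixes (g j))"
      then have "prefix u (g j)" by simp
      then have "u \<in> tree_nodes q m"
        using tree_node_label[OF bij j] prefix_length_le set_mono_prefix
        unfolding tree_nodes_def by fastforce
      then obtain j' where "j' < n" "g j' = u" using obtain_coord_labelling[OF bij] by blast
      then show "u \<in> g ` {j'. j' < n \<and> prefix (g j') (g j)}" using \<open>prefix u (g j)\<close> by blast
    qed auto
  qed
  then show ?thesis by (simp add: bij_betw_same_card)
qed

lemma tree_partition_value_at_prefix:
  assumes p: "p \<in> tree_partition q n {..<n} g m" "p ! j \<noteq> None"
    and j: "j < n" "j' < n" and pre: "strict_prefix (g j') (g j)"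
  shows "p ! j' = Some (g j ! length (g j'))"
proof -
  obtain w where w: "w \<in> tree_leaves q m" "p = tree_cube n {..<n} g w"
    using p(1) unfolding tree_partition_def by blast
  then have "strict_prefix (g j) w" using p(2) j by (simp add: nth_tree_cube split: if_splits)
  then obtain zs where "w = g j @ zs" by (auto elim!: strict_prefixE prefixE)
  moreover have "strict_prefix (g j') w" using pre \<open>strict_prefix (g j) w\<close> by auto
  ultimately show ?thesis
    using w j pre prefix_length_less by (fastforce simp: nth_tree_cube nth_append)
qed

end

theorem tree_partition_determines_labelling:
  assumes q: "2 \<le> q"
    and g: "bij_betw g {..<n} (tree_nodes q m)" and g': "bij_betw g' {..<n} (tree_nodes q m)"
    and eq: "tree_partition q n {..<n} g m = tree_partition q n {..<n} g' m"
    and j: "j < n"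
  shows "g j = g' j"
proof -
  have pre: "prefix (g j2) (g j1) \<longleftrightarrow> prefix (g' j2) (g' j1)" if "j1 < n" "j2 < n" for j1 j2
    using fixing_cubes_subset_iff_prefix[OF q g that] fixing_cubes_subset_iff_prefix[OF q g' that]
      eq by simp
  have len: "length (g j1) = length (g' j1)" if j1: "j1 < n" for j1
  proof -
    have "{j'. j' < n \<and> prefix (g j') (g j1)} = {j'. j' < n \<and> prefix (g' j') (g' j1)}"
      using pre[OF j1] by blast
    then show ?thesis using card_prefix_labels[OF q g j1] card_prefix_labels[OF q g' j1] by simp
  qed
  show ?thesis
  proof (rule nth_equalityI)
    show "length (g j) = length (g' j)" using len[OF j] .
    fix k assume k: "k < length (g j)"
    have "take k (g j) \<in> tree_nodes q m"
      using tree_node_label[OF g j] set_take_subset[of k "g j"] unfolding tree_nodes_def by auto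
    then obtain j' where j': "j' < n" "g j' = take k (g j)"
      using obtain_coord_labelling[OF g] by blast
    then have sp: "strict_prefix (g j') (g j)" and "length (g j') = k"
      using k by (simp_all add: strict_prefix_iff_take)
    then have "length (g' j') < length (g' j)" using len[OF j'(1)] len[OF j] k by simp
    then have sp': "strict_prefix (g' j') (g' j)"
      using pre[OF j j'(1)] sp by (auto simp: strict_prefix_def)
    obtain p where p: "p \<in> tree_partition q n {..<n} g m" "p ! j \<noteq> None"
      using tree_partition_fixes_coord[OF g _ j] q by auto
    have "p ! j' = Some (g j ! k)"
      using tree_partition_value_at_prefix[OF q g p j j'(1) sp] \<open>length (g j') = k\<close> by simp
    moreover have "p ! j' = Some (g' j ! k)"
      using tree_partition_value_at_prefix[OF q g' p[unfolded eq] j j'(1) sp']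
        len[OF j'(1)] \<open>length (g j') = k\<close> by simp
    ultimately show "g j ! k = g' j ! k" by simp
  qed
qed

lemma tree_partition_cong:
  "(\<And>j. j \<in> J \<Longrightarrow> g j = g' j) \<Longrightarrow> tree_partition q n J g m = tree_partition q n J g' m"
  unfolding tree_partition_def tree_cube_def by (intro image_cong refl map_cong) auto

lemma fixed_coords_aprim_partition: "aprim_partition q n m P \<Longrightarrow> fixed_coords n P = {..<n}"
  unfolding aprim_partition_def fixed_coords_def by auto

lemma subcube_partition_aprim_partition: "aprim_partition q n m P \<Longrightarrow> subcube_partition q n P"
  unfolding aprim_partition_def subcube_partition_def by blast

lemma aprim_partition_length_le:
  assumes q: "2 \<le> q" and P: "aprim_partition q n m P"
  shows "n \<le> card (tree_nodes q m)"
proof -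
  have "card P = q ^ m" using P unfolding aprim_partition_def by blast
  then have "1 + (q - 1) * n \<le> q ^ m"
    using card_subcube_partition_ge[OF _ subcube_partition_aprim_partition[OF P]] q
      fixed_coords_aprim_partition[OF P] by simp
  moreover have "(q - 1) * card (tree_nodes q m) + 1 = q ^ m" using card_tree_nodes q by simp
  ultimately have "(q - 1) * n \<le> (q - 1) * card (tree_nodes q m)" by linarith
  then show ?thesis using q by simp
qed

lemma aprim_partition_extremal_iff:
  assumes q: "2 \<le> q" and N: "N = card (tree_nodes q m)"
  shows "aprim_partition q N m P \<longleftrightarrow>
    (\<exists>g. bij_betw g {..<N} (tree_nodes q m) \<and> P = tree_partition q N {..<N} g m)"
proof
  assume P: "aprim_partition q N m P"
  have "card P = q ^ m" and dims: "\<forall>p\<in>P. cube_dim p + m = N"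
    using P unfolding aprim_partition_def by blast+
  then have "card P = 1 + (q - 1) * card (fixed_coords N P)"
    using card_tree_nodes[of q m] q N fixed_coords_aprim_partition[OF P] by simp
  then show "\<exists>g. bij_betw g {..<N} (tree_nodes q m) \<and> P = tree_partition q N {..<N} g m"
    using tight_subcube_partition_is_tree_partition[OF q subcube_partition_aprim_partition[OF P]]
      dims fixed_coords_aprim_partition[OF P] by simp
qed (use aprim_partition_tree_partition q in auto)

lemma obtain_tree_labelling:
  obtains g where "bij_betw g {..<card (tree_nodes q m)} (tree_nodes q m)"
  using bij_betw_iff_card[OF finite_lessThan finite_tree_nodes] that by auto

theorem N_coord_eq_card_tree_nodes:
  assumes q: "2 \<le> q"
  shows "N_coord q m = card (tree_nodes q m)"
  unfolding N_coord_def
proof (rule Least_equality)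
  show "\<forall>n>card (tree_nodes q m). \<not> (\<exists>P. aprim_partition q n m P)"
    using aprim_partition_length_le[OF q] leD by blast
next
  fix N assume N: "\<forall>n>N. \<not> (\<exists>P. aprim_partition q n m P)"
  obtain g where "bij_betw g {..<card (tree_nodes q m)} (tree_nodes q m)"
    using obtain_tree_labelling .
  then have "\<exists>P. aprim_partition q (card (tree_nodes q m)) m P"
    using aprim_partition_extremal_iff[OF q refl] by blast
  then show "card (tree_nodes q m) \<le> N" using N not_less by blast
qed

theorem c_coord_star_eq_fact:
  assumes q: "2 \<le> q" and N: "N = card (tree_nodes q m)"
  shows "c_coord_star q N m = fact N"
proof -
  obtain g0 where g0: "bij_betw g0 {..<N} (tree_nodes q m)"
    using obtain_tree_labelling N by metis
  define F where "F \<sigma> = tree_partition q N {..<N} (g0 \<circ> \<sigma>) m" for \<sigma>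
  have bij_comp: "bij_betw (g0 \<circ> \<sigma>) {..<N} (tree_nodes q m)" if "\<sigma> permutes {..<N}" for \<sigma>
    using bij_betw_trans[OF permutes_imp_bij[OF that] g0] .
  have "{P. aprim_partition q N m P} = F ` {\<sigma>. \<sigma> permutes {..<N}}"
  proof (intro equalityI subsetI)
    fix P assume "P \<in> {P. aprim_partition q N m P}"
    then obtain g where g: "bij_betw g {..<N} (tree_nodes q m)" "P = tree_partition q N {..<N} g m"
      using aprim_partition_extremal_iff[OF q N] by blast
    obtain \<sigma> where "\<sigma> permutes {..<N}" "\<And>j. j \<in> {..<N} \<Longrightarrow> g j = (g0 \<circ> \<sigma>) j"
      using bij_betw_obtain_permutes_factor[OF g0 g(1)] by auto
    then show "P \<in> F ` {\<sigma>. \<sigma> permutes {..<N}}"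
      unfolding F_def g(2) using tree_partition_cong by blast
  qed (use aprim_partition_tree_partition[OF bij_comp] q in \<open>auto simp: F_def\<close>)
  moreover have "inj_on F {\<sigma>. \<sigma> permutes {..<N}}"
  proof (rule inj_onI)
    fix \<sigma>1 \<sigma>2
    assume "\<sigma>1 \<in> {\<sigma>. \<sigma> permutes {..<N}}" "\<sigma>2 \<in> {\<sigma>. \<sigma> permutes {..<N}}" and "F \<sigma>1 = F \<sigma>2"
    then show "\<sigma>1 = \<sigma>2"
      using tree_partition_determines_labelling[OF q bij_comp bij_comp] bij_betw_imp_inj_on[OF g0]
      unfolding F_def by (intro permutes_eq_if_comp_eq[where f = g0]) auto
  qed
  ultimately have "c_coord_star q N m = card {\<sigma>. \<sigma> permutes {..<N}}"
    unfolding c_coord_star_def by (simp add: card_image)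
  also have "\<dots> = fact N" by (simp add: card_permutations)
  finally show ?thesis .
qed

theorem theorem7:
  fixes q m :: nat
  assumes "q \<ge> 2" and "m \<ge> 1"
  shows "N_coord q m = (q ^ m - 1) div (q - 1) \<and>
         c_coord_star q ((q ^ m - 1) div (q - 1)) m = fact ((q ^ m - 1) div (q - 1))"
proof -
  have "q ^ m - 1 = (q - 1) * card (tree_nodes q m)"
    using card_tree_nodes[of q m] assms(1) by simp
  then have "(q ^ m - 1) div (q - 1) = card (tree_nodes q m)"
    using assms(1) by simp
  then show ?thesis
    using N_coord_eq_card_tree_nodes c_coord_star_eq_fact assms(1) by simp
qed

end
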